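(* Let $\mathbf{C}=\mathbf{FdHilb}$, let $A$ be a finite-dimensional Hilbert space, and let $X=\mathbb{C}^{n}$ with the classical object $\delta:|i\rangle\mapsto|ii\rangle$, $\epsilon:|i\rangle\mapsto 1$. Then the abstract POVMs on $A$ with outcomes in $X$ (in the sense defined below) are exactly the maps of the form $\rho\mapsto\sum_{i=1}^n\mathrm{Tr}(g_i\rho g_i^\dagger)\,|i\rangle\langle i|$ where $g_1,\dots,g_n$ are linear operators on $A$ with $\sum_i g_i^\dagger g_i=1_A$, i.e. exactly the maps $\rho\mapsto\sum_i\mathrm{Tr}(F_i\rho)|i\rangle\langle i|$ for POVMs $\{F_i\}_{i=1}^n$ (positive operators $F_i$ with $\sum_i F_i=1_A$) in the usual sense.
   Context: Classical object: in a $\dagger$-compact category, an object $X$ with $\delta: X\to X\otimes X$, $\epsilon: X\to I$ forming a special ($\delta^\dagger\circ\delta=1_X$) commutative comonoid satisfying $\delta\circ\delta^\dagger=(1_X\otimes\delta^\dagger)\circ(\delta\otimes 1_X)$ and with $\eta_X=\delta\circ\epsilon^\dagger$ (so $X^*=X$). $\mathbf{CPM}(\mathbf{C})$ is Selinger's category whose objects are those of $\mathbf{C}$ and whose morphisms $A\to B$ are the completely positive morphisms $A\otimes A^*\to B\otimes B^*$ of $\mathbf{C}$ (those of the form $(1_B\otimes\eta_C^\dagger\otimes 1_{B^*})\circ(h\otimes h_* )$ up to symmetry, for some $h:A\to B\otimes C$); $Pure(f)=f\otimes f_*$. In $\mathbf{CPM}(\mathbf{FdHilb})$ these are the usual completely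 positive maps, $f\otimes f_*$ acts as $\rho\mapsto f\rho f^\dagger$ and partial trace is the usual one. Decohere $:=\delta\circ\delta^\dagger$ viewed as a morphism $X\to X$ in $\mathbf{CPM}(\mathbf{C})$ (equivalently $(1_X\otimes\eta_X^\dagger\otimes1_X)\circ(\delta\otimes\delta)$). An $X$-isometry is $\mathcal{V}: X\otimes A\to B$ such that $\mathcal{V}_\delta:=(1_X\otimes\mathcal{V})\circ(\delta\otimes1_A)$ satisfies $\mathcal{V}_\delta^\dagger\circ\mathcal{V}_\delta=1_{X\otimes A}$. A morphism $g: A\to X\otimes A$ is $X$-positive if $(\delta^\dagger\otimes 1_A)\circ(1_X\otimes g): X\otimes A\to X\otimes A$ equals $k\circ k^\dagger$ for some object $B$ and morphism $k: B\to X\otimes A$. A morphism $f: A\to X\otimes B$ is $X$-polar-decomposable if $f=\mathcal{V}_\delta\circ g$ for some $X$-positive $g:A\to X\otimes A$ and $X$-isometry $\mathcal{V}:X\otimes A\to B$. An abstract POVM on $A$ with outcomes in $X$ is the morphism $A\to X$ of $\mathbf{CPM}(\mathbf{C})$ obtained from an $X$-polar-decomposable $f: A\to X\otimes A$ with $f^\dagger\circ f=1_A$ by applying $Pure(f)=f\otimes f_*$, then Decohere on the $X$-part, then tracing out $A$ (i.e. $\mathrm{tr}^A[\mathrm{Decohere}\circ(f\otimes f_* )]$). *)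

theory Defs
  imports "Jordan_Normal_Form.Schur_Decomposition"
begin

text \<open>Concrete model of FdHilb: a finite-dimensional Hilbert space of dimension m is
  modelled as complex column vectors of length m; a linear map from dimension p to
  dimension q is a q x p complex matrix; composition is matrix product and the dagger
  is the conjugate transpose (mat_adjoint).  Tensor product of spaces of dimensions
  p and q has dimension p*q with basis index (i,j) mapped to i*q+j.\<close>

definition kron :: "complex mat \<Rightarrow> complex mat \<Rightarrow> complex mat" where
  "kron M N = mat (dim_row M * dim_row N) (dim_col M * dim_col N)
     (\<lambda>(r,c). M $$ (r div dim_row N, c div dim_col N) * N $$ (r mod dim_row N, c mod dim_col N))"

text \<open>The classical object X = C^n with copying map delta |i> = |ii> (an (n*n) x n matrix).\<close>
definition delta :: "nat \<Rightarrow> complex mat" where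
  "delta n = mat (n*n) n (\<lambda>(r,c). if r = c*n + c then 1 else 0)"

definition V_delta :: "nat \<Rightarrow> nat \<Rightarrow> complex mat \<Rightarrow> complex mat" where
  "V_delta n a V = kron (1\<^sub>m n) V * kron (delta n) (1\<^sub>m a)"

definition X_isometry :: "nat \<Rightarrow> nat \<Rightarrow> nat \<Rightarrow> complex mat \<Rightarrow> bool" where
  "X_isometry n a b V \<longleftrightarrow> V \<in> carrier_mat b (n*a) \<and>
     mat_adjoint (V_delta n a V) * V_delta n a V = 1\<^sub>m (n*a)"

definition X_positive :: "nat \<Rightarrow> nat \<Rightarrow> complex mat \<Rightarrow> bool" where
  "X_positive n a g \<longleftrightarrow> g \<in> carrier_mat (n*a) a \<and>
     (\<exists>m k. k \<in> carrier_mat (n*a) m \<and>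
        kron (mat_adjoint (delta n)) (1\<^sub>m a) * kron (1\<^sub>m n) g = k * mat_adjoint k)"

definition X_polar_decomposable :: "nat \<Rightarrow> nat \<Rightarrow> nat \<Rightarrow> complex mat \<Rightarrow> bool" where
  "X_polar_decomposable n a b f \<longleftrightarrow> f \<in> carrier_mat (n*b) a \<and>
     (\<exists>g V. X_positive n a g \<and> X_isometry n a b V \<and> f = V_delta n a V * g)"

definition ketbra :: "nat \<Rightarrow> nat \<Rightarrow> complex mat" where
  "ketbra n i = mat n n (\<lambda>(r,c). if r = i \<and> c = i then 1 else 0)"

definition msum :: "nat \<Rightarrow> nat \<Rightarrow> (nat \<Rightarrow> complex mat) \<Rightarrow> complex mat" where
  "msum d n M = mat d d (\<lambda>(r,c). \<Sum>i<n. M i $$ (r,c))"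

definition pure_map :: "complex mat \<Rightarrow> complex mat \<Rightarrow> complex mat" where
  "pure_map f \<rho> = f * \<rho> * mat_adjoint f"

text \<open>Decohere on the X-part of X (x) A, as a CP map: Kraus operators |i><i| (x) 1_A
  (coming from delta = sum_i |ii><i|), i.e. rho |-> sum_i (|i><i| (x) 1) rho (|i><i| (x) 1).\<close>
definition decohere_X :: "nat \<Rightarrow> nat \<Rightarrow> complex mat \<Rightarrow> complex mat" where
  "decohere_X n a \<rho> = msum (n*a) n (\<lambda>i. kron (ketbra n i) (1\<^sub>m a) * \<rho> * kron (ketbra n i) (1\<^sub>m a))"

definition ptrace_A :: "nat \<Rightarrow> nat \<Rightarrow> complex mat \<Rightarrow> complex mat" where
  "ptrace_A n a M = mat n n (\<lambda>(i,j). \<Sum>k<a. M $$ (i*a + k, j*a + k))"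

definition abstract_povm_map :: "nat \<Rightarrow> nat \<Rightarrow> complex mat \<Rightarrow> complex mat \<Rightarrow> complex mat" where
  "abstract_povm_map n a f \<rho> = ptrace_A n a (decohere_X n a (pure_map f \<rho>))"

definition is_abstract_POVM :: "nat \<Rightarrow> nat \<Rightarrow> (complex mat \<Rightarrow> complex mat) \<Rightarrow> bool" where
  "is_abstract_POVM n d \<Phi> \<longleftrightarrow>
     (\<exists>f. f \<in> carrier_mat (n*d) d \<and> mat_adjoint f * f = 1\<^sub>m d \<and>
          X_polar_decomposable n d d f \<and>
          (\<forall>\<rho> \<in> carrier_mat d d. \<Phi> \<rho> = abstract_povm_map n d f \<rho>))"

definition mtrace :: "complex mat \<Rightarrow> complex" where
  "mtrace M = (\<Sum>i<dim_row M. M $$ (i,i))"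

definition positive_op :: "nat \<Rightarrow> complex mat \<Rightarrow> bool" where
  "positive_op d F \<longleftrightarrow> F \<in> carrier_mat d d \<and>
     (\<forall>v \<in> carrier_vec d. let z = (F *\<^sub>v v) \<bullet>c v in Im z = 0 \<and> Re z \<ge> 0)"

end

theory Submission
  imports Defs "Jordan_Normal_Form.Spectral_Radius"
begin

text \<open>Write \<open>f : A \<rightarrow> X \<otimes> A\<close> as the stack of its row blocks
  \<open>f\<^sub>i = (\<langle>i| \<otimes> 1) f\<close>. Decoherence deletes the off-diagonal blocks of
  \<open>f \<rho> f\<^sup>\<dagger>\<close>, so the abstract POVM of \<open>f\<close> is
  \<open>\<rho> \<mapsto> \<Sum>\<^sub>i Tr(f\<^sub>i \<rho> f\<^sub>i\<^sup>\<dagger>) |i\<rangle>\<langle>i|\<close>, while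
  \<open>f\<^sup>\<dagger> f = \<Sum>\<^sub>i f\<^sub>i\<^sup>\<dagger> f\<^sub>i\<close>; this is the Kraus form, and the POVM form
  follows with \<open>F\<^sub>i = f\<^sub>i\<^sup>\<dagger> f\<^sub>i\<close> by cyclicity of the trace.
  Conversely, \<open>(\<delta>\<^sup>\<dagger> \<otimes> 1)(1 \<otimes> f)\<close> is the block-diagonal matrix of the \<open>f\<^sub>i\<close>, and
  the \<open>X\<close>-isometry whose column blocks are all identities has \<open>V\<^sub>\<delta> = 1\<close>. Hence
  \<open>f\<close> is \<open>X\<close>-polar-decomposable as soon as every \<open>f\<^sub>i\<close> is positive, and for a
  given POVM we take \<open>f\<^sub>i = \<surd>F\<^sub>i\<close>, which exists by the spectral theorem because
  positive operators are Hermitian.\<close>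

section \<open>Adjoints and positive operators\<close>

lemma mat_adjoint_dim [simp]:
  "dim_row (mat_adjoint A) = dim_col A" "dim_col (mat_adjoint A) = dim_row A"
  by (simp_all add: mat_adjoint_def mat_of_rows_def)

lemma mat_adjoint_carrier [simp]: "A \<in> carrier_mat m n \<Longrightarrow> mat_adjoint A \<in> carrier_mat n m"
  by auto

lemma mat_adjoint_index [simp]:
  "i < dim_col A \<Longrightarrow> j < dim_row A \<Longrightarrow> mat_adjoint A $$ (i, j) = conjugate (A $$ (j, i))"
  by (simp add: mat_adjoint_def mat_of_rows_def)

lemma row_mat_adjoint: "i < dim_col A \<Longrightarrow> row (mat_adjoint A) i = conjugate (col A i)"
  by (rule eq_vecI) auto

lemma col_mat_adjoint: "j < dim_row A \<Longrightarrow> col (mat_adjoint A) j = conjugate (row A j)"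
  by (rule eq_vecI) auto

lemma mat_adjoint_adjoint [simp]: "mat_adjoint (mat_adjoint A) = (A :: 'a :: conjugatable_field mat)"
  by (rule eq_matI) auto

lemma mat_adjoint_one [simp]: "mat_adjoint (1\<^sub>m n :: complex mat) = 1\<^sub>m n"
  by (rule eq_matI) auto

lemma mat_adjoint_mult:
  fixes A :: "'a :: conjugatable_field mat"
  assumes "A \<in> carrier_mat m n" "B \<in> carrier_mat n p"
  shows "mat_adjoint (A * B) = mat_adjoint B * mat_adjoint A"
proof (rule eq_matI)
  fix i j assume "i < dim_row (mat_adjoint B * mat_adjoint A)" "j < dim_col (mat_adjoint B * mat_adjoint A)"
  with assms show "mat_adjoint (A * B) $$ (i, j) = (mat_adjoint B * mat_adjoint A) $$ (i, j)"
    by (simp add: row_mat_adjoint col_mat_adjoint conjugate_sprod_vec[symmetric, of _ n]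
        comm_scalar_prod[of _ n])
qed (use assms in auto)

lemma mat_adjoint_mat_diag: "mat_adjoint (mat_diag n f) = mat_diag n (\<lambda>i. cnj (f i))"
  by (rule eq_matI) (auto simp: mat_diag_def)

lemma index_mult_mat_sum:
  "A \<in> carrier_mat m n \<Longrightarrow> B \<in> carrier_mat n p \<Longrightarrow> i < m \<Longrightarrow> j < p \<Longrightarrow>
   (A * B) $$ (i, j) = (\<Sum>k<n. A $$ (i, k) * B $$ (k, j))"
  by (auto simp: scalar_prod_def atLeast0LessThan intro!: sum.cong)

lemma cscalar_prod_mat_adjoint:
  fixes A :: "complex mat"
  assumes A: "A \<in> carrier_mat n m" and v: "v \<in> carrier_vec m" and w: "w \<in> carrier_vec n"
  shows "(A *\<^sub>v v) \<bullet>c w = v \<bullet>c (mat_adjoint A *\<^sub>v w)"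
proof -
  have "(A *\<^sub>v v) \<bullet>c w = (\<Sum>i<n. \<Sum>k<m. A $$ (i, k) * v $ k * cnj (w $ i))"
    using A v w by (simp add: scalar_prod_def atLeast0LessThan sum_distrib_right)
  also have "\<dots> = (\<Sum>k<m. \<Sum>i<n. A $$ (i, k) * v $ k * cnj (w $ i))"
    by (rule sum.swap)
  also have "\<dots> = v \<bullet>c (mat_adjoint A *\<^sub>v w)"
    using A v w by (simp add: scalar_prod_def atLeast0LessThan sum_distrib_left mult_ac)
  finally show ?thesis .
qed

lemma cscalar_prod_swap:
  assumes v: "v \<in> carrier_vec n" and w: "w \<in> carrier_vec n"
  shows "v \<bullet>c w = cnj (w \<bullet>c (v :: complex vec))"
proof -
  have "v \<bullet>c w = conjugate (conjugate v \<bullet> w)" using conjugate_conjugate_sprod[OF v w] by simp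
  also have "conjugate v \<bullet> w = w \<bullet>c v" using v w by (intro comm_scalar_prod[of _ n]) auto
  finally show ?thesis by simp
qed

lemma nonneg_complex_iff: "(0 :: complex) \<le> z \<longleftrightarrow> Im z = 0 \<and> 0 \<le> Re z"
  by (auto simp: less_eq_complex_def)

lemma positive_op_iff:
  "positive_op d F \<longleftrightarrow> F \<in> carrier_mat d d \<and> (\<forall>v \<in> carrier_vec d. 0 \<le> (F *\<^sub>v v) \<bullet>c v)"
  by (simp add: positive_op_def nonneg_complex_iff Let_def)

lemma positive_op_adjoint_mult:
  assumes g: "g \<in> carrier_mat m d"
  shows "positive_op d (mat_adjoint g * g)"
  unfolding positive_op_iff
proof (intro conjI ballI)
  fix v :: "complex vec" assume v: "v \<in> carrier_vec d"
  have "((mat_adjoint g * g) *\<^sub>v v) \<bullet>c v = (mat_adjoint g *\<^sub>v (g *\<^sub>v v)) \<bullet>c v"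
    using g v by (subst assoc_mult_mat_vec) auto
  also have "\<dots> = (g *\<^sub>v v) \<bullet>c (g *\<^sub>v v)"
    using g v by (subst cscalar_prod_mat_adjoint[of _ d m]) auto
  finally show "0 \<le> ((mat_adjoint g * g) *\<^sub>v v) \<bullet>c v"
    by (simp add: conjugate_square_ge_0_vec)
qed (rule mult_carrier_mat[OF mat_adjoint_carrier[OF g] g])

lemma cscalar_prod_unit_vec:
  fixes A :: "complex mat"
  assumes "A \<in> carrier_mat n m" "j < m" "k < n"
  shows "(A *\<^sub>v unit_vec m j) \<bullet>c unit_vec n k = A $$ (k, j)"
proof -
  have "conjugate (unit_vec n k) = (unit_vec n k :: complex vec)"
    using assms by (intro eq_vecI) auto
  with assms show ?thesis
    by simp
qed

lemma cscalar_prod_form_add_smult: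
  fixes A :: "complex mat"
  assumes A: "A \<in> carrier_mat n n" and x: "x \<in> carrier_vec n" and y: "y \<in> carrier_vec n"
  shows "(A *\<^sub>v (x + c \<cdot>\<^sub>v y)) \<bullet>c (x + c \<cdot>\<^sub>v y) =
    (A *\<^sub>v x) \<bullet>c x + cnj c * ((A *\<^sub>v x) \<bullet>c y) + c * ((A *\<^sub>v y) \<bullet>c x) + c * cnj c * ((A *\<^sub>v y) \<bullet>c y)"
  using assms
  by (simp add: mult_add_distrib_mat_vec[of _ n n] mult_mat_vec[of _ n n] conjugate_add_vec[of _ n]
      conjugate_smult_vec add_scalar_prod_distrib[of _ n] scalar_prod_add_distrib[of _ n] algebra_simps)

lemma cscalar_prod_form_zero_imp_zero:
  fixes A :: "complex mat"
  assumes A: "A \<in> carrier_mat n n" and form: "\<And>v. v \<in> carrier_vec n \<Longrightarrow> (A *\<^sub>v v) \<bullet>c v = 0"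
  shows "A = 0\<^sub>m n n"
proof (rule eq_matI)
  fix k j assume "k < dim_row (0\<^sub>m n n :: complex mat)" "j < dim_col (0\<^sub>m n n :: complex mat)"
  hence k: "k < n" and j: "j < n" by auto
  define x where "x = (unit_vec n j :: complex vec)"
  define y where "y = (unit_vec n k :: complex vec)"
  have x: "x \<in> carrier_vec n" and y: "y \<in> carrier_vec n" by (simp_all add: x_def y_def)
  have polar: "cnj c * ((A *\<^sub>v x) \<bullet>c y) + c * ((A *\<^sub>v y) \<bullet>c x) = 0" for c
    using cscalar_prod_form_add_smult[OF A x y, of c] form[of x] form[of y] form[of "x + c \<cdot>\<^sub>v y"] x y
    by simp
  \<comment> \<open>polarisation: \<open>c = 1\<close> and \<open>c = \<i>\<close> separate the two cross terms\<close>
  from polar[of 1] have sum0: "(A *\<^sub>v x) \<bullet>c y + (A *\<^sub>v y) \<bullet>c x = 0" by simp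
  from polar[of \<i>] have "\<i> * ((A *\<^sub>v y) \<bullet>c x - (A *\<^sub>v x) \<bullet>c y) = 0"
    by (simp add: algebra_simps)
  with sum0 have "(A *\<^sub>v x) \<bullet>c y = 0" by simp
  thus "A $$ (k, j) = 0\<^sub>m n n $$ (k, j)"
    using cscalar_prod_unit_vec[OF A j k] j k by (simp add: x_def y_def)
qed (use A in auto)

lemma positive_op_hermitian:
  assumes "positive_op d F"
  shows "mat_adjoint F = F"
proof -
  have F: "F \<in> carrier_mat d d" and real: "\<And>v. v \<in> carrier_vec d \<Longrightarrow> Im ((F *\<^sub>v v) \<bullet>c v) = 0"
    using assms by (auto simp: positive_op_def Let_def)
  have Fa: "mat_adjoint F \<in> carrier_mat d d" using F by simp
  have diff: "F - mat_adjoint F = 0\<^sub>m d d"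
  proof (rule cscalar_prod_form_zero_imp_zero)
    fix v :: "complex vec" assume v: "v \<in> carrier_vec d"
    have "(mat_adjoint F *\<^sub>v v) \<bullet>c v = v \<bullet>c (F *\<^sub>v v)"
      using cscalar_prod_mat_adjoint[OF Fa v v] by simp
    also have "\<dots> = cnj ((F *\<^sub>v v) \<bullet>c v)"
      using F v by (intro cscalar_prod_swap[of _ d]) auto
    also have "\<dots> = (F *\<^sub>v v) \<bullet>c v"
      using real[OF v] by (simp add: complex_eq_iff)
    finally have "(mat_adjoint F *\<^sub>v v) \<bullet>c v = (F *\<^sub>v v) \<bullet>c v" .
    moreover have "((F - mat_adjoint F) *\<^sub>v v) \<bullet>c v = (F *\<^sub>v v) \<bullet>c v - (mat_adjoint F *\<^sub>v v) \<bullet>c v"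
      unfolding minus_mult_distrib_mat_vec[OF F Fa v]
      by (rule minus_scalar_prod_distrib[of _ d]) (use F Fa v in \<open>auto intro!: mult_mat_vec_carrier\<close>)
    ultimately show "((F - mat_adjoint F) *\<^sub>v v) \<bullet>c v = 0" by simp
  qed (use F Fa in auto)
  show ?thesis
  proof (rule eq_matI)
    fix i j assume "i < dim_row F" "j < dim_col F"
    with F show "mat_adjoint F $$ (i, j) = F $$ (i, j)"
      using arg_cong[OF diff, of "\<lambda>M. M $$ (i, j)"] by simp
  qed (use F in auto)
qed

section \<open>Spectral theorem for Hermitian matrices\<close>

definition unitary_mat :: "nat \<Rightarrow> complex mat \<Rightarrow> bool" where
  "unitary_mat n U \<longleftrightarrow> U \<in> carrier_mat n n \<and> mat_adjoint U * U = 1\<^sub>m n"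

lemma unitary_mat_right_inverse: "unitary_mat n U \<Longrightarrow> U * mat_adjoint U = 1\<^sub>m n"
  unfolding unitary_mat_def by (metis mat_adjoint_carrier mat_mult_left_right_inverse)

lemma unitary_mat_mult:
  assumes U: "unitary_mat n U" and V: "unitary_mat n V"
  shows "unitary_mat n (U * V)"
proof -
  have Uc: "U \<in> carrier_mat n n" and Vc: "V \<in> carrier_mat n n"
    using U V by (simp_all add: unitary_mat_def)
  have "mat_adjoint (U * V) * (U * V) = mat_adjoint V * ((mat_adjoint U * U) * V)"
    using Uc Vc by (simp add: mat_adjoint_mult[OF Uc Vc] assoc_mult_mat[of _ n n _ n _ n])
  also have "\<dots> = 1\<^sub>m n"
    using U V Vc by (simp add: unitary_mat_def)
  finally show ?thesis
    using Uc Vc by (simp add: unitary_mat_def)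
qed

lemma unitary_mat_of_normalized_cols:
  assumes ws: "set ws \<subseteq> carrier_vec n" "corthogonal ws" "length ws = n"
  shows "unitary_mat n (mat_of_cols n (map (\<lambda>w. (1 / complex_of_real (sqrt (Re (w \<bullet>c w)))) \<cdot>\<^sub>v w) ws))"
proof -
  define W where "W = mat_of_cols n (map (\<lambda>w. (1 / complex_of_real (sqrt (Re (w \<bullet>c w)))) \<cdot>\<^sub>v w) ws)"
  define nr where "nr i = sqrt (Re (ws ! i \<bullet>c ws ! i))" for i
  have wsc: "i < n \<Longrightarrow> ws ! i \<in> carrier_vec n" for i using ws by auto
  have self: "i < n \<Longrightarrow> ws ! i \<bullet>c ws ! i = complex_of_real (nr i ^ 2) \<and> nr i > 0" for i
    using conjugate_square_ge_0_vec[of "ws ! i"] corthogonalD[OF ws(2), of i i] ws(3)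
    by (auto simp: nr_def nonneg_complex_iff complex_eq_iff)
  have W: "W \<in> carrier_mat n n" using ws(3) by (auto simp: W_def)
  have colW: "i < n \<Longrightarrow> col W i = (1 / complex_of_real (nr i)) \<cdot>\<^sub>v ws ! i" for i
    using wsc ws(3) by (simp add: W_def nr_def)
  have "mat_adjoint W * W = 1\<^sub>m n"
  proof (rule eq_matI)
    fix i j assume "i < dim_row (1\<^sub>m n :: complex mat)" "j < dim_col (1\<^sub>m n :: complex mat)"
    hence i: "i < n" and j: "j < n" by auto
    have "(mat_adjoint W * W) $$ (i, j) = col W j \<bullet>c col W i"
      using W i j by (simp add: row_mat_adjoint comm_scalar_prod[of _ n])
    also have "\<dots> = (ws ! j \<bullet>c ws ! i) / complex_of_real (nr i * nr j)"
      using wsc[OF i] wsc[OF j] by (simp add: colW i j conjugate_smult_vec)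
    also have "\<dots> = 1\<^sub>m n $$ (i, j)"
      using self[OF i] corthogonalD[OF ws(2), of j i] i j ws(3)
      by (cases "i = j") (auto simp: power2_eq_square)
    finally show "(mat_adjoint W * W) $$ (i, j) = 1\<^sub>m n $$ (i, j)" .
  qed (use W in auto)
  with W show ?thesis by (simp add: unitary_mat_def W_def)
qed

lemma unitary_completion:
  fixes v :: "complex vec"
  assumes v: "v \<in> carrier_vec n" and v0: "v \<noteq> 0\<^sub>v n"
  shows "\<exists>W c. unitary_mat n W \<and> col W 0 = c \<cdot>\<^sub>v v"
proof -
  have n: "n > 0" using v v0 by (cases n) auto
  interpret cof_vec_space n "TYPE(complex)" .
  from basis_completion[OF v v0] obtain b where dist_b: "distinct b" and indep: "\<not> lin_dep (set b)"
    and b: "set b \<subseteq> carrier_vec n" and hd_b: "hd b = v" and len_b: "length b = n"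
    by auto
  from hd_b len_b n obtain vs where bv: "b = v # vs" by (cases b) auto
  define ws where "ws = gram_schmidt n b"
  from gram_schmidt_result[OF b dist_b indep refl, folded ws_def]
  have ws: "set ws \<subseteq> carrier_vec n" "corthogonal ws" "length ws = n"
    by (auto simp: len_b)
  have ws0: "ws ! 0 = v"
    using gram_schmidt_hd[OF v, of vs] ws(3) n unfolding ws_def bv by (cases "gram_schmidt n (v # vs)") auto
  have "col (mat_of_cols n (map (\<lambda>w. (1 / complex_of_real (sqrt (Re (w \<bullet>c w)))) \<cdot>\<^sub>v w) ws)) 0 =
      (1 / complex_of_real (sqrt (Re (v \<bullet>c v)))) \<cdot>\<^sub>v v"
  proof -
    have "ws ! 0 \<in> carrier_vec n" using ws n by auto
    then show ?thesis
      using ws n by (subst col_mat_of_cols) (auto simp: ws0)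
  qed
  then show ?thesis
    using unitary_mat_of_normalized_cols[OF ws] by blast
qed

lemma mat_adjoint_four_block_diag:
  fixes A :: "complex mat"
  assumes "A \<in> carrier_mat r1 c1" "D \<in> carrier_mat r2 c2"
  shows "mat_adjoint (four_block_mat A (0\<^sub>m r1 c2) (0\<^sub>m r2 c1) D) =
    four_block_mat (mat_adjoint A) (0\<^sub>m c1 r2) (0\<^sub>m c2 r1) (mat_adjoint D)"
  by (rule eq_matI) (use assms in auto)

lemma mult_four_block_diag:
  fixes A1 :: "complex mat"
  assumes "A1 \<in> carrier_mat r1 n1" "D1 \<in> carrier_mat r2 n2" "A2 \<in> carrier_mat n1 c1" "D2 \<in> carrier_mat n2 c2"
  shows "four_block_mat A1 (0\<^sub>m r1 n2) (0\<^sub>m r2 n1) D1 * four_block_mat A2 (0\<^sub>m n1 c2) (0\<^sub>m n2 c1) D2 =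
    four_block_mat (A1 * A2) (0\<^sub>m r1 c2) (0\<^sub>m r2 c1) (D1 * D2)"
  by (subst mult_four_block_mat[OF assms(1) zero_carrier_mat zero_carrier_mat assms(2)
        assms(3) zero_carrier_mat zero_carrier_mat assms(4)]) (use assms in simp)

lemma hermitian_first_column_deflation:
  fixes B :: "complex mat"
  assumes B: "B \<in> carrier_mat (Suc m) (Suc m)" and herm: "mat_adjoint B = B"
    and col0: "col B 0 = e \<cdot>\<^sub>v unit_vec (Suc m) 0"
  defines "B' \<equiv> mat m m (\<lambda>(i, j). B $$ (Suc i, Suc j))"
  shows "B = four_block_mat (mat 1 1 (\<lambda>_. e)) (0\<^sub>m 1 m) (0\<^sub>m m 1) B'" and "mat_adjoint B' = B'"
proof -
  have entry: "B $$ (i, j) = cnj (B $$ (j, i))" if "i < Suc m" "j < Suc m" for i j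
    using arg_cong[OF herm, of "\<lambda>M. M $$ (i, j)"] B that by simp
  have B_i0: "B $$ (i, 0) = (if i = 0 then e else 0)" if "i < Suc m" for i
    using arg_cong[OF col0, of "\<lambda>x. x $ i"] B that by simp
  have "e = cnj e" using entry[of 0 0] B_i0[of 0] by simp
  then have B_0j: "B $$ (0, j) = (if j = 0 then e else 0)" if "j < Suc m" for j
    using entry[of 0 j] B_i0[of j] that by auto
  show "B = four_block_mat (mat 1 1 (\<lambda>_. e)) (0\<^sub>m 1 m) (0\<^sub>m m 1) B'"
  proof (rule eq_matI)
    fix i j assume ij: "i < dim_row (four_block_mat (mat 1 1 (\<lambda>_. e)) (0\<^sub>m 1 m) (0\<^sub>m m 1) B')"
      "j < dim_col (four_block_mat (mat 1 1 (\<lambda>_. e)) (0\<^sub>m 1 m) (0\<^sub>m m 1) B')"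
    then show "B $$ (i, j) = four_block_mat (mat 1 1 (\<lambda>_. e)) (0\<^sub>m 1 m) (0\<^sub>m m 1) B' $$ (i, j)"
      using B_i0 B_0j by (cases i; cases j) (auto simp: B'_def)
  qed (use B in \<open>auto simp: B'_def\<close>)
  show "mat_adjoint B' = B'"
    by (rule eq_matI) (auto simp: B'_def entry[symmetric])
qed

text \<open>Complete an eigenvector to a unitary basis: in that basis the first column of \<open>A\<close> is
  \<open>e \<cdot> e\<^sub>0\<close>, and hermiticity clears the rest of the first row.\<close>

lemma hermitian_unitary_deflation:
  fixes A :: "complex mat"
  assumes A: "A \<in> carrier_mat (Suc m) (Suc m)" and herm: "mat_adjoint A = A"
  shows "\<exists>W e B'. unitary_mat (Suc m) W \<and> B' \<in> carrier_mat m m \<and> mat_adjoint B' = B' \<and>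
    mat_adjoint W * A * W = four_block_mat (mat 1 1 (\<lambda>_. e)) (0\<^sub>m 1 m) (0\<^sub>m m 1) B'"
proof -
  obtain e where "eigenvalue A e"
    using spectrum_non_empty[OF A] unfolding spectrum_def by auto
  then obtain v where v: "v \<in> carrier_vec (Suc m)" "v \<noteq> 0\<^sub>v (Suc m)" and Av: "A *\<^sub>v v = e \<cdot>\<^sub>v v"
    using A unfolding eigenvalue_def eigenvector_def by auto
  obtain W c where W: "unitary_mat (Suc m) W" and colW: "col W 0 = c \<cdot>\<^sub>v v"
    using unitary_completion[OF v] by blast
  have Wc: "W \<in> carrier_mat (Suc m) (Suc m)" using W by (simp add: unitary_mat_def)
  have Wa: "mat_adjoint W \<in> carrier_mat (Suc m) (Suc m)" using Wc by simp
  have WaA: "mat_adjoint W * A \<in> carrier_mat (Suc m) (Suc m)" using Wa A by simp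
  have colWc: "col W 0 \<in> carrier_vec (Suc m)" using Wc by (simp add: carrier_vecI)
  have "mat_adjoint (mat_adjoint W * A * W) = mat_adjoint W * (mat_adjoint A * W)"
    unfolding mat_adjoint_mult[OF WaA Wc] mat_adjoint_mult[OF Wa A] by simp
  also have "\<dots> = mat_adjoint W * A * W"
    using herm Wa A Wc by (simp add: assoc_mult_mat[of _ "Suc m" "Suc m"])
  finally have "mat_adjoint (mat_adjoint W * A * W) = mat_adjoint W * A * W" .
  moreover have "col (mat_adjoint W * A * W) 0 = e \<cdot>\<^sub>v unit_vec (Suc m) 0"
  proof -
    have "A *\<^sub>v col W 0 = e \<cdot>\<^sub>v col W 0"
      using A v Av by (simp add: colW mult_mat_vec[of _ "Suc m" "Suc m"] smult_smult_assoc mult.commute)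
    have "col (mat_adjoint W * A * W) 0 = (mat_adjoint W * A) *\<^sub>v col W 0"
      by (rule col_mult2[OF WaA Wc]) simp
    also have "\<dots> = mat_adjoint W *\<^sub>v (A *\<^sub>v col W 0)"
      by (rule assoc_mult_mat_vec[OF Wa A]) (use colWc in simp)
    also have "\<dots> = e \<cdot>\<^sub>v (mat_adjoint W *\<^sub>v col W 0)"
      unfolding \<open>A *\<^sub>v col W 0 = e \<cdot>\<^sub>v col W 0\<close> by (rule mult_mat_vec[OF Wa]) (use colWc in simp)
    also have "mat_adjoint W *\<^sub>v col W 0 = col (mat_adjoint W * W) 0"
      by (rule col_mult2[OF Wa Wc, symmetric]) simp
    finally show ?thesis
      using W by (simp add: unitary_mat_def)
  qed
  ultimately show ?thesis
    using hermitian_first_column_deflation[OF mult_carrier_mat[OF WaA Wc]] W by (metis mat_carrier)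
qed

lemma four_block_unitary_diagonalization:
  fixes e :: complex
  assumes U: "unitary_mat m U" and D: "D \<in> carrier_mat m m" "diagonal_mat D"
  shows "\<exists>U1 D1. unitary_mat (Suc m) U1 \<and> D1 \<in> carrier_mat (Suc m) (Suc m) \<and> diagonal_mat D1 \<and>
    four_block_mat (mat 1 1 (\<lambda>_. e)) (0\<^sub>m 1 m) (0\<^sub>m m 1) (U * D * mat_adjoint U) = U1 * D1 * mat_adjoint U1"
proof -
  define U1 where "U1 = four_block_mat (1\<^sub>m 1) (0\<^sub>m 1 m) (0\<^sub>m m 1) U"
  define D1 where "D1 = four_block_mat (mat 1 1 (\<lambda>_. e)) (0\<^sub>m 1 m) (0\<^sub>m m 1) D"
  have Uc: "U \<in> carrier_mat m m" using U by (simp add: unitary_mat_def)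
  have adjU1: "mat_adjoint U1 = four_block_mat (1\<^sub>m 1) (0\<^sub>m 1 m) (0\<^sub>m m 1) (mat_adjoint U)"
    unfolding U1_def by (simp add: mat_adjoint_four_block_diag[OF one_carrier_mat Uc])
  have "U1 \<in> carrier_mat (1 + m) (1 + m)"
    unfolding U1_def by (rule four_block_carrier_mat[OF one_carrier_mat Uc])
  moreover have "mat_adjoint U1 * U1 = four_block_mat (1\<^sub>m 1 * 1\<^sub>m 1) (0\<^sub>m 1 m) (0\<^sub>m m 1) (mat_adjoint U * U)"
    unfolding adjU1 unfolding U1_def by (rule mult_four_block_diag) (use Uc in auto)
  ultimately have "unitary_mat (Suc m) U1"
    using U by (simp add: unitary_mat_def)
  moreover have "D1 \<in> carrier_mat (1 + m) (1 + m)"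
    unfolding D1_def by (rule four_block_carrier_mat[OF mat_carrier D(1)])
  moreover have "diagonal_mat D1"
    using D by (auto simp: D1_def diagonal_mat_def)
  moreover have "U1 * D1 = four_block_mat (1\<^sub>m 1 * mat 1 1 (\<lambda>_. e)) (0\<^sub>m 1 m) (0\<^sub>m m 1) (U * D)"
    unfolding U1_def D1_def by (rule mult_four_block_diag) (use Uc D in auto)
  moreover have "\<dots> * mat_adjoint U1 =
      four_block_mat (1\<^sub>m 1 * mat 1 1 (\<lambda>_. e) * 1\<^sub>m 1) (0\<^sub>m 1 m) (0\<^sub>m m 1) (U * D * mat_adjoint U)"
    unfolding adjU1 by (rule mult_four_block_diag) (use Uc D in auto)
  ultimately show ?thesis
    by (intro exI[of _ U1] exI[of _ D1]) simp
qed

lemma unitary_similarity_diagonalization: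
  assumes W: "unitary_mat n W" and A: "A \<in> carrier_mat n n"
    and U: "U \<in> carrier_mat n n" and D: "D \<in> carrier_mat n n"
    and eq: "mat_adjoint W * A * W = U * D * mat_adjoint U"
  shows "A = (W * U) * D * mat_adjoint (W * U)"
proof -
  have Wc: "W \<in> carrier_mat n n" and Wa: "mat_adjoint W \<in> carrier_mat n n"
    using W by (simp_all add: unitary_mat_def)
  have "W * (mat_adjoint W * A * W) * mat_adjoint W = (W * mat_adjoint W) * A * (W * mat_adjoint W)"
    using Wc Wa A by (simp add: assoc_mult_mat[of _ n n _ n _ n] mult_carrier_mat[of _ n n])
  then have "A = W * (U * D * mat_adjoint U) * mat_adjoint W"
    using unitary_mat_right_inverse[OF W] A by (simp add: eq)
  also have "\<dots> = (W * U) * D * mat_adjoint (W * U)"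
    using Wc Wa U D by (simp add: mat_adjoint_mult[OF Wc U] assoc_mult_mat[of _ n n _ n _ n]
        mult_carrier_mat[of _ n n])
  finally show ?thesis .
qed

theorem hermitian_unitary_diagonalization:
  fixes A :: "complex mat"
  assumes "A \<in> carrier_mat n n" and "mat_adjoint A = A"
  shows "\<exists>U D. unitary_mat n U \<and> D \<in> carrier_mat n n \<and> diagonal_mat D \<and> A = U * D * mat_adjoint U"
  using assms
proof (induction n arbitrary: A)
  case 0
  then show ?case
    by (intro exI[of _ "1\<^sub>m 0"]) (auto simp: unitary_mat_def diagonal_mat_def)
next
  case (Suc m)
  obtain W e B' where W: "unitary_mat (Suc m) W" and B': "B' \<in> carrier_mat m m" "mat_adjoint B' = B'"
    and deflate: "mat_adjoint W * A * W = four_block_mat (mat 1 1 (\<lambda>_. e)) (0\<^sub>m 1 m) (0\<^sub>m m 1) B'"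
    using hermitian_unitary_deflation[OF Suc.prems] by blast
  obtain U D where U: "unitary_mat m U" and D: "D \<in> carrier_mat m m" "diagonal_mat D"
    and B'_eq: "B' = U * D * mat_adjoint U"
    using Suc.IH[OF B'] by blast
  obtain U1 D1 where U1: "unitary_mat (Suc m) U1" and D1: "D1 \<in> carrier_mat (Suc m) (Suc m)" "diagonal_mat D1"
    and "mat_adjoint W * A * W = U1 * D1 * mat_adjoint U1"
    using four_block_unitary_diagonalization[OF U D, of e] unfolding deflate B'_eq by blast
  then have "A = (W * U1) * D1 * mat_adjoint (W * U1)"
    using U1 by (intro unitary_similarity_diagonalization[OF W Suc.prems(1) _ D1(1)]) (simp_all add: unitary_mat_def)
  then show ?case
    using unitary_mat_mult[OF W U1] D1 by blast
qed

section \<open>Square roots of positive operators\<close>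

lemma unitary_conjugation_mult:
  assumes U: "unitary_mat n U" and X: "X \<in> carrier_mat n n" and Y: "Y \<in> carrier_mat n n"
  shows "(U * X * mat_adjoint U) * (U * Y * mat_adjoint U) = U * (X * Y) * mat_adjoint U"
proof -
  have Uc: "U \<in> carrier_mat n n" and Ua: "mat_adjoint U \<in> carrier_mat n n"
    using U by (simp_all add: unitary_mat_def)
  have "(U * X * mat_adjoint U) * (U * Y * mat_adjoint U) = U * (X * ((mat_adjoint U * U) * (Y * mat_adjoint U)))"
    using Uc Ua X Y by (simp add: assoc_mult_mat[of _ n n _ n _ n] mult_carrier_mat[of _ n n])
  also have "\<dots> = U * (X * Y) * mat_adjoint U"
    using U Uc Ua X Y by (simp add: unitary_mat_def assoc_mult_mat[of _ n n _ n _ n] mult_carrier_mat[of _ n n])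
  finally show ?thesis .
qed

lemma positive_op_unitary_diagonalization:
  assumes F: "positive_op d F"
  shows "\<exists>U ev. unitary_mat d U \<and> (\<forall>i<d. 0 \<le> ev i) \<and>
    F = U * mat_diag d (\<lambda>i. complex_of_real (ev i)) * mat_adjoint U"
proof -
  have Fc: "F \<in> carrier_mat d d" and form: "\<And>v. v \<in> carrier_vec d \<Longrightarrow> 0 \<le> (F *\<^sub>v v) \<bullet>c v"
    using F by (auto simp: positive_op_iff)
  obtain U D where U: "unitary_mat d U" and D: "D \<in> carrier_mat d d" "diagonal_mat D"
    and F_eq: "F = U * D * mat_adjoint U"
    using hermitian_unitary_diagonalization[OF Fc positive_op_hermitian[OF F]] by blast
  have Uc: "U \<in> carrier_mat d d" and Ua: "mat_adjoint U \<in> carrier_mat d d"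
    using U by (simp_all add: unitary_mat_def)
  have "mat_adjoint U * (F * U) = (mat_adjoint U * U) * D * (mat_adjoint U * U)"
    using Uc Ua D by (simp add: F_eq assoc_mult_mat[of _ d d _ d _ d] mult_carrier_mat[of _ d d])
  then have D_eq: "D = mat_adjoint U * (F * U)"
    using U D by (simp add: unitary_mat_def)
  have D_nonneg: "0 \<le> D $$ (i, i)" if i: "i < d" for i
  proof -
    have "D $$ (i, i) = conjugate (col U i) \<bullet> (F *\<^sub>v col U i)"
      using Uc Fc i by (simp add: D_eq row_mat_adjoint del: col_mult)
    also have "\<dots> = (F *\<^sub>v col U i) \<bullet>c col U i"
      using Uc Fc i by (intro comm_scalar_prod[of _ d]) auto
    finally show ?thesis
      using form[of "col U i"] Uc i by (simp add: carrier_vecI)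
  qed
  have "D = mat_diag d (\<lambda>i. complex_of_real (Re (D $$ (i, i))))"
  proof (rule eq_matI)
    fix i j assume "i < dim_row (mat_diag d (\<lambda>i. complex_of_real (Re (D $$ (i, i)))))"
      "j < dim_col (mat_diag d (\<lambda>i. complex_of_real (Re (D $$ (i, i)))))"
    then have i: "i < d" and j: "j < d" by (auto simp: mat_diag_def)
    then show "D $$ (i, j) = mat_diag d (\<lambda>i. complex_of_real (Re (D $$ (i, i)))) $$ (i, j)"
      using D D_nonneg[OF i] by (cases "i = j") (auto simp: mat_diag_def diagonal_mat_def nonneg_complex_iff complex_eq_iff)
  qed (use D in \<open>auto simp: mat_diag_def\<close>)
  with U D_nonneg F_eq show ?thesis
    by (intro exI[of _ U] exI[of _ "\<lambda>i. Re (D $$ (i, i))"]) (auto simp: nonneg_complex_iff)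
qed

text \<open>The square root is produced in the form \<open>K K\<^sup>\<dagger>\<close>, which is what \<open>X\<close>-positivity asks of it.\<close>

lemma positive_op_square_root:
  assumes F: "positive_op d F"
  shows "\<exists>K \<in> carrier_mat d d. (K * mat_adjoint K) * (K * mat_adjoint K) = F"
proof -
  obtain U ev where U: "unitary_mat d U" and ev: "\<And>i. i < d \<Longrightarrow> 0 \<le> ev i"
    and F_eq: "F = U * mat_diag d (\<lambda>i. complex_of_real (ev i)) * mat_adjoint U"
    using positive_op_unitary_diagonalization[OF F] by blast
  have Uc: "U \<in> carrier_mat d d" using U by (simp add: unitary_mat_def)
  define R where "R = mat_diag d (\<lambda>i. complex_of_real (sqrt (sqrt (ev i))))"
  have Rc: "R \<in> carrier_mat d d" by (simp add: R_def)
  have RR: "R * mat_adjoint R = mat_diag d (\<lambda>i. complex_of_real (sqrt (ev i)))"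
    unfolding R_def mat_adjoint_mat_diag mat_diag_diag
    by (rule eq_matI) (auto simp: mat_diag_def ev simp flip: of_real_mult)
  have "(U * R) * mat_adjoint (U * R) = U * (R * mat_adjoint R) * mat_adjoint U"
    using Uc Rc by (simp add: mat_adjoint_mult[OF Uc Rc] assoc_mult_mat[of _ d d _ d _ d] mult_carrier_mat[of _ d d])
  then have KK: "(U * R) * mat_adjoint (U * R) = U * mat_diag d (\<lambda>i. complex_of_real (sqrt (ev i))) * mat_adjoint U"
    by (simp only: RR)
  have "mat_diag d (\<lambda>i. complex_of_real (sqrt (ev i))) * mat_diag d (\<lambda>i. complex_of_real (sqrt (ev i))) =
      mat_diag d (\<lambda>i. complex_of_real (ev i))"
    unfolding mat_diag_diag by (rule eq_matI) (auto simp: mat_diag_def ev simp flip: of_real_mult)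
  then have "((U * R) * mat_adjoint (U * R)) * ((U * R) * mat_adjoint (U * R)) = F"
    unfolding KK F_eq by (simp add: unitary_conjugation_mult[OF U])
  then show ?thesis
    using Uc Rc by (intro bexI[of _ "U * R"]) simp_all
qed

section \<open>Block structure of \<open>X \<otimes> A\<close>\<close>

lemma sum_lessThan_mult_blocks: "(\<Sum>s<n * d. g s) = (\<Sum>i<n. \<Sum>k<d. g (i * d + k :: nat))"
proof -
  have "(\<Sum>s<n * d. g s) = (\<Sum>i<n. \<Sum>s\<in>{i * d..<i * d + d}. g s)"
    by (rule sum.nat_group[symmetric])
  also have "\<dots> = (\<Sum>i<n. \<Sum>k<d. g (i * d + k))"
    using sum.shift_bounds_nat_ivl[of g 0 "i * d" d for i] by (simp add: atLeast0LessThan add.commute)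
  finally show ?thesis .
qed

lemma block_index_less: "i < n \<Longrightarrow> k < d \<Longrightarrow> i * d + k < n * (d :: nat)"
proof -
  assume "i < n" "k < d"
  then have "i * d + k < (i + 1) * d" by simp
  also have "\<dots> \<le> n * d" using \<open>i < n\<close> by (intro mult_le_mono1) simp
  finally show ?thesis .
qed

lemma div_mod_eq_iff: "y < d \<Longrightarrow> (s div d = x \<and> s mod d = y) \<longleftrightarrow> s = x * d + (y :: nat)"
  by (metis add.commute div_mult_mod_eq div_mult_self1 div_less mod_less mod_mult_self3
      add_0 gr_implies_not0)

lemma kron_dim [simp]:
  "dim_row (kron M N) = dim_row M * dim_row N" "dim_col (kron M N) = dim_col M * dim_col N"
  by (simp_all add: kron_def)

lemma kron_index:
  "r < dim_row M * dim_row N \<Longrightarrow> s < dim_col M * dim_col N \<Longrightarrow>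
   kron M N $$ (r, s) = M $$ (r div dim_row N, s div dim_col N) * N $$ (r mod dim_row N, s mod dim_col N)"
  by (simp add: kron_def)

lemma mat_adjoint_kron:
  assumes "dim_row B > 0" "dim_col B > 0"
  shows "mat_adjoint (kron A B) = kron (mat_adjoint A) (mat_adjoint B)"
  by (rule eq_matI) (use assms in \<open>auto simp: kron_index less_mult_imp_div_less\<close>)

lemma kron_ketbra_one: "kron (ketbra n l) (1\<^sub>m d) = mat_diag (n * d) (\<lambda>r. if r div d = l then 1 else 0)"
proof (rule eq_matI)
  fix r s assume "r < dim_row (mat_diag (n * d) (\<lambda>r. if r div d = l then 1 else 0) :: complex mat)"
    "s < dim_col (mat_diag (n * d) (\<lambda>r. if r div d = l then 1 else 0) :: complex mat)"
  then have r: "r < n * d" and s: "s < n * d" by (auto simp: mat_diag_def)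
  then have d: "d > 0" by (cases d) auto
  then have "(r div d = s div d \<and> r mod d = s mod d) = (r = s)"
    by (metis div_mult_mod_eq)
  with r s d show "kron (ketbra n l) (1\<^sub>m d) $$ (r, s) = mat_diag (n * d) (\<lambda>r. if r div d = l then 1 else 0) $$ (r, s)"
    by (auto simp: kron_index ketbra_def mat_diag_def less_mult_imp_div_less)
qed (auto simp: ketbra_def mat_diag_def)

lemma msum_index: "r < m \<Longrightarrow> c < m \<Longrightarrow> msum m n M $$ (r, c) = (\<Sum>i<n. M i $$ (r, c))"
  by (simp add: msum_def)

lemma msum_cong: "(\<And>i. i < n \<Longrightarrow> M i = M' i) \<Longrightarrow> msum d n M = msum d n M'"
  unfolding msum_def by (intro eq_matI) auto

lemma decohere_X_index:
  assumes "M \<in> carrier_mat (n * d) (n * d)" "r < n * d" "c < n * d"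
  shows "decohere_X n d M $$ (r, c) = (if r div d = c div d then M $$ (r, c) else 0)"
proof -
  have indicator: "(if P then 1 else 0) * x * (if Q then 1 else 0) = (if P \<and> Q then x else 0)" for P Q and x :: complex
    by simp
  have "decohere_X n d M $$ (r, c) = (\<Sum>l<n. if r div d = l \<and> c div d = l then M $$ (r, c) else 0)"
    using assms by (auto simp: decohere_X_def msum_index kron_ketbra_one mat_diag_mult_left[of _ "n * d" "n * d"]
        mat_diag_mult_right[of _ "n * d" "n * d"] indicator intro!: sum.cong)
  also have "\<dots> = (if r div d = c div d then M $$ (r, c) else 0)"
    using less_mult_imp_div_less[OF assms(2)] by (cases "r div d = c div d") (auto intro!: sum.neutral)
  finally show ?thesis .
qed

lemma ptrace_A_decohere_X_index:
  assumes "M \<in> carrier_mat (n * d) (n * d)" "i < n" "j < n"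
  shows "ptrace_A n d (decohere_X n d M) $$ (i, j) = (if i = j then (\<Sum>k<d. M $$ (i * d + k, i * d + k)) else 0)"
  using assms by (auto simp: ptrace_A_def decohere_X_index block_index_less intro!: sum.cong)

text \<open>For \<open>f : A \<rightarrow> X \<otimes> A\<close> with \<open>dim X = n\<close>, \<open>dim A = d\<close>, the matrix \<open>row_block d f i\<close> is the
  Kraus operator \<open>(\<langle>i| \<otimes> 1) f\<close>.\<close>

definition row_block :: "nat \<Rightarrow> complex mat \<Rightarrow> nat \<Rightarrow> complex mat" where
  "row_block d f i = mat d (dim_col f) (\<lambda>(r, c). f $$ (i * d + r, c))"

lemma row_block_dim [simp]: "dim_row (row_block d f i) = d" "dim_col (row_block d f i) = dim_col f"
  by (simp_all add: row_block_def)

lemma row_block_index [simp]: "r < d \<Longrightarrow> c < dim_col f \<Longrightarrow> row_block d f i $$ (r, c) = f $$ (i * d + r, c)"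
  by (simp add: row_block_def)

lemma row_row_block: "k < d \<Longrightarrow> row (row_block d f i) k = row f (i * d + k)"
  by (rule eq_vecI) (auto simp: row_def)

lemma row_block_mult:
  assumes "A \<in> carrier_mat (n * d) m" "B \<in> carrier_mat m p" "i < n"
  shows "row_block d (A * B) i = row_block d A i * B"
  by (rule eq_matI) (use assms in \<open>auto simp: block_index_less row_row_block\<close>)

lemma index_mult_mat_adjoint:
  "a < dim_row X \<Longrightarrow> b < dim_row Y \<Longrightarrow> dim_col X = dim_col Y \<Longrightarrow>
   (X * mat_adjoint Y) $$ (a, b) = row X a \<bullet>c row Y b"
  by (simp add: col_mat_adjoint)

lemma mtrace_mult_comm:
  assumes A: "A \<in> carrier_mat m k" and B: "B \<in> carrier_mat k m"
  shows "mtrace (A * B) = mtrace (B * A)"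
proof -
  have "mtrace (A * B) = (\<Sum>i<m. \<Sum>j<k. A $$ (i, j) * B $$ (j, i))"
    using A B by (auto simp: mtrace_def scalar_prod_def atLeast0LessThan intro!: sum.cong)
  also have "\<dots> = (\<Sum>j<k. \<Sum>i<m. B $$ (j, i) * A $$ (i, j))"
    by (subst sum.swap) (simp add: mult.commute)
  also have "\<dots> = mtrace (B * A)"
    using A B by (auto simp: mtrace_def scalar_prod_def atLeast0LessThan intro!: sum.cong)
  finally show ?thesis .
qed

lemma mtrace_sandwich:
  assumes A: "A \<in> carrier_mat m d" and \<rho>: "\<rho> \<in> carrier_mat d d"
  shows "mtrace (A * \<rho> * mat_adjoint A) = mtrace (mat_adjoint A * A * \<rho>)"
  using mtrace_mult_comm[OF mult_carrier_mat[OF A \<rho>] mat_adjoint_carrier[OF A]]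
  by (simp add: assoc_mult_mat[OF mat_adjoint_carrier[OF A] A \<rho>])

section \<open>Abstract POVMs\<close>

definition kraus_measurement :: "nat \<Rightarrow> (nat \<Rightarrow> complex mat) \<Rightarrow> complex mat \<Rightarrow> complex mat" where
  "kraus_measurement n g \<rho> = msum n n (\<lambda>i. mtrace (g i * \<rho> * mat_adjoint (g i)) \<cdot>\<^sub>m ketbra n i)"

definition povm_measurement :: "nat \<Rightarrow> (nat \<Rightarrow> complex mat) \<Rightarrow> complex mat \<Rightarrow> complex mat" where
  "povm_measurement n F \<rho> = msum n n (\<lambda>i. mtrace (F i * \<rho>) \<cdot>\<^sub>m ketbra n i)"

lemma msum_ketbra_index:
  assumes "i < n" "j < n"
  shows "msum n n (\<lambda>l. c l \<cdot>\<^sub>m ketbra n l) $$ (i, j) = (if i = j then c i else 0)"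
proof -
  have indicator: "x * (if P then 1 else 0) = (if P then x else 0)" for x :: complex and P
    by simp
  show ?thesis
    using assms by (cases "i = j") (auto simp: msum_index ketbra_def indicator intro!: sum.neutral)
qed

lemma abstract_povm_map_eq_kraus_measurement:
  assumes f: "f \<in> carrier_mat (n * d) d" and \<rho>: "\<rho> \<in> carrier_mat d d"
  shows "abstract_povm_map n d f \<rho> = kraus_measurement n (row_block d f) \<rho>"
proof (rule eq_matI)
  fix i j assume "i < dim_row (kraus_measurement n (row_block d f) \<rho>)"
    "j < dim_col (kraus_measurement n (row_block d f) \<rho>)"
  then have i: "i < n" and j: "j < n" by (auto simp: kraus_measurement_def msum_def)
  have f\<rho>: "f * \<rho> \<in> carrier_mat (n * d) d" using f \<rho> by simp
  have M: "f * \<rho> * mat_adjoint f \<in> carrier_mat (n * d) (n * d)"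
    using mult_carrier_mat[OF f\<rho> mat_adjoint_carrier[OF f]] .
  have diag: "(f * \<rho> * mat_adjoint f) $$ (i * d + k, i * d + k) =
      (row_block d f i * \<rho> * mat_adjoint (row_block d f i)) $$ (k, k)" if k: "k < d" for k
  proof -
    have "(f * \<rho> * mat_adjoint f) $$ (i * d + k, i * d + k) = row (f * \<rho>) (i * d + k) \<bullet>c row f (i * d + k)"
      using f\<rho> f i k by (intro index_mult_mat_adjoint) (auto simp: block_index_less)
    also have "\<dots> = row (row_block d f i * \<rho>) k \<bullet>c row (row_block d f i) k"
      using f \<rho> i k by (simp add: row_row_block row_block_mult[symmetric, of f n d d \<rho> d])
    also have "\<dots> = (row_block d f i * \<rho> * mat_adjoint (row_block d f i)) $$ (k, k)"
      using f \<rho> k by (intro index_mult_mat_adjoint[symmetric]) auto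
    finally show ?thesis .
  qed
  have sum_diag: "(\<Sum>k<d. (f * \<rho> * mat_adjoint f) $$ (i * d + k, i * d + k)) =
      mtrace (row_block d f i * \<rho> * mat_adjoint (row_block d f i))"
  proof -
    have "dim_row (row_block d f i * \<rho> * mat_adjoint (row_block d f i)) = d" by simp
    then show ?thesis
      unfolding mtrace_def by (intro sum.cong) (simp_all add: diag)
  qed
  have "abstract_povm_map n d f \<rho> $$ (i, j) = (if i = j then mtrace (row_block d f i * \<rho> * mat_adjoint (row_block d f i)) else 0)"
    unfolding abstract_povm_map_def pure_map_def ptrace_A_decohere_X_index[OF M i j] sum_diag ..
  also have "\<dots> = kraus_measurement n (row_block d f) \<rho> $$ (i, j)"
    unfolding kraus_measurement_def by (rule msum_ketbra_index[OF i j, symmetric])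
  finally show "abstract_povm_map n d f \<rho> $$ (i, j) = kraus_measurement n (row_block d f) \<rho> $$ (i, j)" .
qed (simp_all add: abstract_povm_map_def ptrace_A_def kraus_measurement_def msum_def)

lemma mat_adjoint_mult_row_blocks:
  assumes f: "f \<in> carrier_mat (n * d) m"
  shows "mat_adjoint f * f = msum m n (\<lambda>i. mat_adjoint (row_block d f i) * row_block d f i)"
proof (rule eq_matI)
  fix r c assume "r < dim_row (msum m n (\<lambda>i. mat_adjoint (row_block d f i) * row_block d f i))"
    "c < dim_col (msum m n (\<lambda>i. mat_adjoint (row_block d f i) * row_block d f i))"
  then have r: "r < m" and c: "c < m" by (auto simp: msum_def)
  have "(mat_adjoint f * f) $$ (r, c) = (\<Sum>s<n * d. cnj (f $$ (s, r)) * f $$ (s, c))"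
    by (subst index_mult_mat_sum[of _ m "n * d" _ m]) (use f r c in auto)
  also have "\<dots> = (\<Sum>i<n. \<Sum>k<d. cnj (f $$ (i * d + k, r)) * f $$ (i * d + k, c))"
    by (rule sum_lessThan_mult_blocks)
  also have "\<dots> = (\<Sum>i<n. (mat_adjoint (row_block d f i) * row_block d f i) $$ (r, c))"
  proof (rule sum.cong[OF refl])
    fix i assume "i \<in> {..<n}"
    then show "(\<Sum>k<d. cnj (f $$ (i * d + k, r)) * f $$ (i * d + k, c)) =
        (mat_adjoint (row_block d f i) * row_block d f i) $$ (r, c)"
      by (subst index_mult_mat_sum[of _ m d _ m]) (use f r c in \<open>auto simp: block_index_less\<close>)
  qed
  also have "\<dots> = msum m n (\<lambda>i. mat_adjoint (row_block d f i) * row_block d f i) $$ (r, c)"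
    using r c by (simp add: msum_index)
  finally show "(mat_adjoint f * f) $$ (r, c) = msum m n (\<lambda>i. mat_adjoint (row_block d f i) * row_block d f i) $$ (r, c)" .
qed (use f in \<open>auto simp: msum_def\<close>)

section \<open>\<open>X\<close>-polar decomposition\<close>

lemma delta_dim [simp]: "dim_row (delta n) = n * n" "dim_col (delta n) = n"
  by (simp_all add: delta_def)

text \<open>\<open>\<delta> \<otimes> 1\<close> sends the basis vector \<open>|i, k\<rangle>\<close>, with index \<open>c = i d + k\<close>, to \<open>|i, i, k\<rangle>\<close>,
  whose index is \<open>i (n d) + c\<close>.\<close>

lemma kron_delta_one_index:
  assumes s: "s < n * (n * d)" and c: "c < n * d"
  shows "kron (delta n) (1\<^sub>m d) $$ (s, c) = (if s = c div d * (n * d) + c then 1 else 0)"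
proof -
  have d: "d > 0" using c by (cases d) auto
  have "c div d * (n * d) + c = (c div d * n + c div d) * d + c mod d"
    by (simp add: algebra_simps)
  then have "(s div d = c div d * n + c div d \<and> s mod d = c mod d) \<longleftrightarrow> s = c div d * (n * d) + c"
    using div_mod_eq_iff[of "c mod d" d s] d by simp
  then show ?thesis
    using s c d by (auto simp: kron_index delta_def mult.assoc less_mult_imp_div_less)
qed

lemma copy_index_less: "c < n * d \<Longrightarrow> c div d * (n * d) + c < n * (n * (d :: nat))"
  by (rule block_index_less) (simp_all add: less_mult_imp_div_less)

lemma copy_index_div_mod:
  assumes "c < n * (d :: nat)"
  shows "(c div d * (n * d) + c) div (n * d) = c div d" "(c div d * (n * d) + c) mod (n * d) = c"
proof -
  have "n * d \<noteq> 0" using assms by (metis less_nat_zero_code)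
  then show "(c div d * (n * d) + c) div (n * d) = c div d" "(c div d * (n * d) + c) mod (n * d) = c"
    using assms by (simp_all add: add.commute[of "c div d * (n * d)"])
qed

lemma V_delta_index:
  assumes V: "V \<in> carrier_mat d (n * d)" and r: "r < n * d" and c: "c < n * d"
  shows "V_delta n d V $$ (r, c) = (if r div d = c div d then V $$ (r mod d, c) else 0)"
proof -
  let ?s = "c div d * (n * d) + c"
  have K1: "kron (1\<^sub>m n) V \<in> carrier_mat (n * d) (n * (n * d))"
    using V by (intro carrier_matI) auto
  have K2: "kron (delta n) (1\<^sub>m d) \<in> carrier_mat (n * (n * d)) (n * d)"
    by (intro carrier_matI) (simp_all add: mult.assoc)
  have "V_delta n d V $$ (r, c) = (\<Sum>s<n * (n * d). kron (1\<^sub>m n) V $$ (r, s) * (if s = ?s then 1 else 0))"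
    unfolding V_delta_def index_mult_mat_sum[OF K1 K2 r c] using c
    by (intro sum.cong) (simp_all add: kron_delta_one_index)
  also have "\<dots> = kron (1\<^sub>m n) V $$ (r, ?s)"
    using copy_index_less[OF c] by (simp add: if_distrib[of "\<lambda>x. _ * x"] cong: if_cong)
  also have "\<dots> = (if r div d = c div d then V $$ (r mod d, c) else 0)"
    using V r copy_index_less[OF c] less_mult_imp_div_less[OF r] less_mult_imp_div_less[OF c] mod_less[OF c]
    by (auto simp: kron_index copy_index_div_mod[OF c])
  finally show ?thesis .
qed

lemma kron_delta_adjoint_one_mult_index:
  assumes g: "g \<in> carrier_mat (n * d) d" and r: "r < n * d" and c: "c < n * d"
  shows "(kron (mat_adjoint (delta n)) (1\<^sub>m d) * kron (1\<^sub>m n) g) $$ (r, c) =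
    (if r div d = c div d then g $$ (r, c mod d) else 0)"
proof -
  let ?s = "r div d * (n * d) + r"
  have d: "d > 0" using r by (cases d) auto
  have K1: "kron (mat_adjoint (delta n)) (1\<^sub>m d) \<in> carrier_mat (n * d) (n * (n * d))"
    by (intro carrier_matI) (simp_all add: mult.assoc)
  have K2: "kron (1\<^sub>m n) g \<in> carrier_mat (n * (n * d)) (n * d)"
    using g by (intro carrier_matI) auto
  have adj: "kron (mat_adjoint (delta n)) (1\<^sub>m d) = mat_adjoint (kron (delta n) (1\<^sub>m d))"
    using d by (simp add: mat_adjoint_kron)
  have "(kron (mat_adjoint (delta n)) (1\<^sub>m d) * kron (1\<^sub>m n) g) $$ (r, c) =
      (\<Sum>s<n * (n * d). kron (mat_adjoint (delta n)) (1\<^sub>m d) $$ (r, s) * kron (1\<^sub>m n) g $$ (s, c))"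
    by (rule index_mult_mat_sum[OF K1 K2 r c])
  also have "\<dots> = (\<Sum>s<n * (n * d). (if s = ?s then 1 else 0) * kron (1\<^sub>m n) g $$ (s, c))"
  proof (rule sum.cong[OF refl])
    fix s assume "s \<in> {..<n * (n * d)}"
    then have "kron (mat_adjoint (delta n)) (1\<^sub>m d) $$ (r, s) = (if s = ?s then 1 else 0)"
      using r by (simp add: adj mult.assoc kron_delta_one_index)
    then show "kron (mat_adjoint (delta n)) (1\<^sub>m d) $$ (r, s) * kron (1\<^sub>m n) g $$ (s, c) =
        (if s = ?s then 1 else 0) * kron (1\<^sub>m n) g $$ (s, c)" by simp
  qed
  also have "\<dots> = kron (1\<^sub>m n) g $$ (?s, c)"
    using copy_index_less[OF r] by (simp add: if_distrib[of "\<lambda>x. x * _"] cong: if_cong)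
  also have "\<dots> = (if r div d = c div d then g $$ (r, c mod d) else 0)"
    using g c copy_index_less[OF r] less_mult_imp_div_less[OF r] less_mult_imp_div_less[OF c] mod_less[OF r]
    by (auto simp: kron_index copy_index_div_mod[OF r])
  finally show ?thesis .
qed

definition block_diag :: "nat \<Rightarrow> nat \<Rightarrow> (nat \<Rightarrow> complex mat) \<Rightarrow> complex mat" where
  "block_diag n d K = mat (n * d) (n * d)
     (\<lambda>(r, c). if r div d = c div d then K (r div d) $$ (r mod d, c mod d) else 0)"

lemma block_diag_carrier [simp]: "block_diag n d K \<in> carrier_mat (n * d) (n * d)"
  by (simp add: block_diag_def)

lemma block_diag_dim [simp]: "dim_row (block_diag n d K) = n * d" "dim_col (block_diag n d K) = n * d"
  by (simp_all add: block_diag_def)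

lemma block_diag_index:
  "r < n * d \<Longrightarrow> c < n * d \<Longrightarrow>
   block_diag n d K $$ (r, c) = (if r div d = c div d then K (r div d) $$ (r mod d, c mod d) else 0)"
  by (simp add: block_diag_def)

lemma block_diag_cong: "(\<And>i. i < n \<Longrightarrow> K i = L i) \<Longrightarrow> block_diag n d K = block_diag n d L"
  by (rule eq_matI) (auto simp: block_diag_index less_mult_imp_div_less)

lemma mat_adjoint_block_diag:
  assumes "\<And>i. i < n \<Longrightarrow> K i \<in> carrier_mat d d"
  shows "mat_adjoint (block_diag n d K) = block_diag n d (\<lambda>i. mat_adjoint (K i))"
proof (rule eq_matI)
  fix r c assume "r < dim_row (block_diag n d (\<lambda>i. mat_adjoint (K i)))"
    "c < dim_col (block_diag n d (\<lambda>i. mat_adjoint (K i)))"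
  then have r: "r < n * d" and c: "c < n * d" by auto
  then have "d > 0" by (cases d) auto
  then show "mat_adjoint (block_diag n d K) $$ (r, c) = block_diag n d (\<lambda>i. mat_adjoint (K i)) $$ (r, c)"
    using r c assms[OF less_mult_imp_div_less[OF r]] by (auto simp: block_diag_index)
qed auto

lemma block_diag_index_block_row:
  "i < n \<Longrightarrow> k < d \<Longrightarrow> c < n * d \<Longrightarrow>
   block_diag n d K $$ (i * d + k, c) = (if i = c div d then K i $$ (k, c mod d) else 0)"
  by (simp add: block_diag_index block_index_less)

lemma block_diag_index_block_col:
  "i < n \<Longrightarrow> k < d \<Longrightarrow> r < n * d \<Longrightarrow>
   block_diag n d K $$ (r, i * d + k) = (if r div d = i then K i $$ (r mod d, k) else 0)"
  by (simp add: block_diag_index block_index_less)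

lemma block_diag_mult:
  assumes K: "\<And>i. i < n \<Longrightarrow> K i \<in> carrier_mat d d" and L: "\<And>i. i < n \<Longrightarrow> L i \<in> carrier_mat d d"
  shows "block_diag n d K * block_diag n d L = block_diag n d (\<lambda>i. K i * L i)"
proof (rule eq_matI)
  fix r c assume "r < dim_row (block_diag n d (\<lambda>i. K i * L i))" "c < dim_col (block_diag n d (\<lambda>i. K i * L i))"
  then have r: "r < n * d" and c: "c < n * d" by auto
  have d: "d > 0" using r by (cases d) auto
  define q where "q = r div d"
  have q: "q < n" using r by (simp add: q_def less_mult_imp_div_less)
  have "(block_diag n d K * block_diag n d L) $$ (r, c) =
      (\<Sum>i<n. \<Sum>k<d. block_diag n d K $$ (r, i * d + k) * block_diag n d L $$ (i * d + k, c))"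
    by (simp add: index_mult_mat_sum[OF block_diag_carrier block_diag_carrier r c] sum_lessThan_mult_blocks)
  also have "\<dots> = (\<Sum>i<n. if i = q then (if q = c div d then (K q * L q) $$ (r mod d, c mod d) else 0) else 0)"
  proof (rule sum.cong[OF refl])
    fix i assume "i \<in> {..<n}"
    then have "(\<Sum>k<d. block_diag n d K $$ (r, i * d + k) * block_diag n d L $$ (i * d + k, c)) =
        (if i = q \<and> i = c div d then (\<Sum>k<d. K i $$ (r mod d, k) * L i $$ (k, c mod d)) else 0)"
      using r c by (auto simp: block_diag_index_block_row block_diag_index_block_col q_def intro!: sum.neutral)
    also have "\<dots> = (if i = q then (if q = c div d then (K q * L q) $$ (r mod d, c mod d) else 0) else 0)"
      using d q K[OF q] L[OF q] by (subst index_mult_mat_sum[OF K[OF q] L[OF q]]) auto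
    finally show "(\<Sum>k<d. block_diag n d K $$ (r, i * d + k) * block_diag n d L $$ (i * d + k, c)) =
        (if i = q then (if q = c div d then (K q * L q) $$ (r mod d, c mod d) else 0) else 0)" .
  qed
  also have "\<dots> = block_diag n d (\<lambda>i. K i * L i) $$ (r, c)"
    using r c q by (simp add: block_diag_index q_def)
  finally show "(block_diag n d K * block_diag n d L) $$ (r, c) = block_diag n d (\<lambda>i. K i * L i) $$ (r, c)" .
qed auto

lemma kron_delta_adjoint_one_mult_eq_block_diag:
  assumes g: "g \<in> carrier_mat (n * d) d"
  shows "kron (mat_adjoint (delta n)) (1\<^sub>m d) * kron (1\<^sub>m n) g = block_diag n d (row_block d g)"
proof (rule eq_matI)
  fix r c assume "r < dim_row (block_diag n d (row_block d g))" "c < dim_col (block_diag n d (row_block d g))"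
  then have r: "r < n * d" and c: "c < n * d" by auto
  have d: "d > 0" using r by (cases d) auto
  have "r div d = c div d \<Longrightarrow> c div d * d + r mod d = r"
    by (metis div_mult_mod_eq)
  then show "(kron (mat_adjoint (delta n)) (1\<^sub>m d) * kron (1\<^sub>m n) g) $$ (r, c) = block_diag n d (row_block d g) $$ (r, c)"
    unfolding kron_delta_adjoint_one_mult_index[OF g r c] block_diag_index[OF r c] using g d by auto
qed (use g in \<open>auto simp: mult.assoc\<close>)

text \<open>The witness \<open>V\<close> has identity column blocks, so \<open>V\<^sub>\<delta> = 1\<close> and \<open>f = V\<^sub>\<delta> f\<close>.\<close>

lemma X_polar_decomposable_if_row_blocks_positive:
  assumes f: "f \<in> carrier_mat (n * d) d" and K: "\<And>i. i < n \<Longrightarrow> K i \<in> carrier_mat d d"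
    and blocks: "\<And>i. i < n \<Longrightarrow> row_block d f i = K i * mat_adjoint (K i)"
  shows "X_polar_decomposable n d d f"
proof -
  define V where "V = mat d (n * d) (\<lambda>(r, c). if c mod d = r then 1 else (0 :: complex))"
  have V: "V \<in> carrier_mat d (n * d)" by (simp add: V_def)
  have V_delta: "V_delta n d V = 1\<^sub>m (n * d)"
  proof (rule eq_matI)
    fix r c assume "r < dim_row (1\<^sub>m (n * d) :: complex mat)" "c < dim_col (1\<^sub>m (n * d) :: complex mat)"
    then have r: "r < n * d" and c: "c < n * d" by auto
    then have "d > 0" by (cases d) auto
    then show "V_delta n d V $$ (r, c) = 1\<^sub>m (n * d) $$ (r, c)"
      unfolding V_delta_index[OF V r c]
      using r c div_mod_eq_iff[of "r mod d" d c "r div d"] by (auto simp: V_def)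
  qed (use V in \<open>simp_all add: V_delta_def\<close>)
  have "X_isometry n d d V"
    using V by (simp add: X_isometry_def V_delta)
  moreover have "X_positive n d f"
  proof -
    have "kron (mat_adjoint (delta n)) (1\<^sub>m d) * kron (1\<^sub>m n) f = block_diag n d (\<lambda>i. K i * mat_adjoint (K i))"
      unfolding kron_delta_adjoint_one_mult_eq_block_diag[OF f] by (rule block_diag_cong) (rule blocks)
    also have "\<dots> = block_diag n d K * mat_adjoint (block_diag n d K)"
      using K by (simp add: mat_adjoint_block_diag block_diag_mult)
    finally show ?thesis
      unfolding X_positive_def using f by (intro conjI exI[of _ "n * d"] exI[of _ "block_diag n d K"]) auto
  qed
  moreover have "f = V_delta n d V * f"
    using f by (simp add: V_delta)
  ultimately show ?thesis
    unfolding X_polar_decomposable_def using f by blast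
qed

section \<open>Kraus and POVM forms\<close>

definition stack_blocks :: "nat \<Rightarrow> nat \<Rightarrow> (nat \<Rightarrow> complex mat) \<Rightarrow> complex mat" where
  "stack_blocks n d P = mat (n * d) d (\<lambda>(r, c). P (r div d) $$ (r mod d, c))"

lemma stack_blocks_carrier [simp]: "stack_blocks n d P \<in> carrier_mat (n * d) d"
  by (simp add: stack_blocks_def)

lemma row_block_stack_blocks: "i < n \<Longrightarrow> P i \<in> carrier_mat d d \<Longrightarrow> row_block d (stack_blocks n d P) i = P i"
  by (rule eq_matI) (auto simp: stack_blocks_def block_index_less)

lemma povm_measurement_cong:
  "(\<And>i. i < n \<Longrightarrow> F i = G i) \<Longrightarrow> povm_measurement n F \<rho> = povm_measurement n G \<rho>"
  unfolding povm_measurement_def by (rule msum_cong) simp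

lemma kraus_measurement_eq_povm_measurement:
  assumes "\<And>i. i < n \<Longrightarrow> g i \<in> carrier_mat m d" and "\<rho> \<in> carrier_mat d d"
  shows "kraus_measurement n g \<rho> = povm_measurement n (\<lambda>i. mat_adjoint (g i) * g i) \<rho>"
  unfolding kraus_measurement_def povm_measurement_def
proof (rule msum_cong)
  fix i assume "i < n"
  then show "mtrace (g i * \<rho> * mat_adjoint (g i)) \<cdot>\<^sub>m ketbra n i = mtrace (mat_adjoint (g i) * g i * \<rho>) \<cdot>\<^sub>m ketbra n i"
    using mtrace_sandwich[OF assms(1) assms(2)] by simp
qed

lemma abstract_povm_map_eq_povm_measurement:
  assumes f: "f \<in> carrier_mat (n * d) d" and \<rho>: "\<rho> \<in> carrier_mat d d"
  shows "abstract_povm_map n d f \<rho> =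
    povm_measurement n (\<lambda>i. mat_adjoint (row_block d f i) * row_block d f i) \<rho>"
  unfolding abstract_povm_map_eq_kraus_measurement[OF f \<rho>]
  by (rule kraus_measurement_eq_povm_measurement[of n "row_block d f" d d, OF _ \<rho>]) (use f in auto)

lemma is_abstract_POVM_imp_kraus:
  assumes "is_abstract_POVM n d \<Phi>"
  shows "\<exists>g. (\<forall>i<n. g i \<in> carrier_mat d d) \<and> msum d n (\<lambda>i. mat_adjoint (g i) * g i) = 1\<^sub>m d \<and>
    (\<forall>\<rho> \<in> carrier_mat d d. \<Phi> \<rho> = kraus_measurement n g \<rho>)"
proof -
  obtain f where f: "f \<in> carrier_mat (n * d) d" and isometry: "mat_adjoint f * f = 1\<^sub>m d"
    and \<Phi>: "\<And>\<rho>. \<rho> \<in> carrier_mat d d \<Longrightarrow> \<Phi> \<rho> = abstract_povm_map n d f \<rho>"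
    using assms unfolding is_abstract_POVM_def by blast
  show ?thesis
    using f isometry
    by (intro exI[of _ "row_block d f"])
      (auto simp: \<Phi> abstract_povm_map_eq_kraus_measurement mat_adjoint_mult_row_blocks[symmetric])
qed

lemma kraus_imp_povm:
  assumes "\<exists>g. (\<forall>i<n. g i \<in> carrier_mat d d) \<and> msum d n (\<lambda>i. mat_adjoint (g i) * g i) = 1\<^sub>m d \<and>
    (\<forall>\<rho> \<in> carrier_mat d d. \<Phi> \<rho> = kraus_measurement n g \<rho>)"
  shows "\<exists>F. (\<forall>i<n. positive_op d (F i)) \<and> msum d n F = 1\<^sub>m d \<and>
    (\<forall>\<rho> \<in> carrier_mat d d. \<Phi> \<rho> = povm_measurement n F \<rho>)"
proof -
  obtain g where g: "\<And>i. i < n \<Longrightarrow> g i \<in> carrier_mat d d"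
    and sum_g: "msum d n (\<lambda>i. mat_adjoint (g i) * g i) = 1\<^sub>m d"
    and \<Phi>: "\<And>\<rho>. \<rho> \<in> carrier_mat d d \<Longrightarrow> \<Phi> \<rho> = kraus_measurement n g \<rho>"
    using assms by blast
  show ?thesis
    using g sum_g
    by (intro exI[of _ "\<lambda>i. mat_adjoint (g i) * g i"])
      (auto simp: positive_op_adjoint_mult[OF g] \<Phi> kraus_measurement_eq_povm_measurement[OF g])
qed

lemma povm_imp_is_abstract_POVM:
  assumes F: "\<And>i. i < n \<Longrightarrow> positive_op d (F i)" and sum_F: "msum d n F = 1\<^sub>m d"
    and \<Phi>: "\<And>\<rho>. \<rho> \<in> carrier_mat d d \<Longrightarrow> \<Phi> \<rho> = povm_measurement n F \<rho>"
  shows "is_abstract_POVM n d \<Phi>"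
proof -
  have "\<forall>i. \<exists>K. i < n \<longrightarrow> K \<in> carrier_mat d d \<and> (K * mat_adjoint K) * (K * mat_adjoint K) = F i"
    using positive_op_square_root[OF F] by blast
  from choice[OF this] obtain K where K: "\<And>i. i < n \<Longrightarrow> K i \<in> carrier_mat d d"
    and K_sq: "\<And>i. i < n \<Longrightarrow> (K i * mat_adjoint (K i)) * (K i * mat_adjoint (K i)) = F i"
    by blast
  define f where "f = stack_blocks n d (\<lambda>i. K i * mat_adjoint (K i))"
  have f: "f \<in> carrier_mat (n * d) d" by (simp add: f_def)
  have blocks: "row_block d f i = K i * mat_adjoint (K i)" if "i < n" for i
    using K[OF that] that by (simp add: f_def row_block_stack_blocks)
  have gram: "mat_adjoint (row_block d f i) * row_block d f i = F i" if "i < n" for i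
    using K[OF that] K_sq[OF that] by (simp add: blocks[OF that] mat_adjoint_mult[of _ d d _ d])
  have "mat_adjoint f * f = 1\<^sub>m d"
    unfolding mat_adjoint_mult_row_blocks[OF f] sum_F[symmetric] by (rule msum_cong) (rule gram)
  moreover have "X_polar_decomposable n d d f"
    using f K blocks by (rule X_polar_decomposable_if_row_blocks_positive)
  moreover have "\<Phi> \<rho> = abstract_povm_map n d f \<rho>" if \<rho>: "\<rho> \<in> carrier_mat d d" for \<rho>
    unfolding abstract_povm_map_eq_povm_measurement[OF f \<rho>] \<Phi>[OF \<rho>]
    by (rule povm_measurement_cong) (rule gram[symmetric])
  ultimately show ?thesis
    unfolding is_abstract_POVM_def using f by blast
qed

theorem mainTheorem2:
  fixes n d :: nat and \<Phi> :: "complex mat \<Rightarrow> complex mat"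
  shows "(is_abstract_POVM n d \<Phi> \<longleftrightarrow>
           (\<exists>g. (\<forall>i<n. g i \<in> carrier_mat d d) \<and>
                msum d n (\<lambda>i. mat_adjoint (g i) * g i) = 1\<^sub>m d \<and>
                (\<forall>\<rho> \<in> carrier_mat d d.
                   \<Phi> \<rho> = msum n n (\<lambda>i. mtrace (g i * \<rho> * mat_adjoint (g i)) \<cdot>\<^sub>m ketbra n i))))
       \<and> (is_abstract_POVM n d \<Phi> \<longleftrightarrow>
           (\<exists>F. (\<forall>i<n. positive_op d (F i)) \<and> msum d n F = 1\<^sub>m d \<and>
                (\<forall>\<rho> \<in> carrier_mat d d.
                   \<Phi> \<rho> = msum n n (\<lambda>i. mtrace (F i * \<rho>) \<cdot>\<^sub>m ketbra n i))))"
proof -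
  let ?A = "is_abstract_POVM n d \<Phi>"
  let ?K = "\<exists>g. (\<forall>i<n. g i \<in> carrier_mat d d) \<and> msum d n (\<lambda>i. mat_adjoint (g i) * g i) = 1\<^sub>m d \<and>
    (\<forall>\<rho> \<in> carrier_mat d d. \<Phi> \<rho> = kraus_measurement n g \<rho>)"
  let ?P = "\<exists>F. (\<forall>i<n. positive_op d (F i)) \<and> msum d n F = 1\<^sub>m d \<and>
    (\<forall>\<rho> \<in> carrier_mat d d. \<Phi> \<rho> = povm_measurement n F \<rho>)"
  have "?A \<Longrightarrow> ?K" by (rule is_abstract_POVM_imp_kraus)
  moreover have "?K \<Longrightarrow> ?P" by (rule kraus_imp_povm)
  moreover have "?P \<Longrightarrow> ?A" using povm_imp_is_abstract_POVM by blast
  ultimately have "(?A \<longleftrightarrow> ?K) \<and> (?A \<longleftrightarrow> ?P)" by blast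
  then show ?thesis
    unfolding kraus_measurement_def povm_measurement_def .
qed

end
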